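(* Let $V$ be a real vector space with a basis $\mathbf{e}=\{e_\lambda\}_{\lambda\in\Lambda}$, and let $\boldsymbol{\phi}=\{\phi_\lambda\}_{\lambda\in\Lambda}\subseteq\operatorname{Hom}_{\mathbb{R}}(V,\mathbb{R})$ satisfy $\phi_\lambda(e_\mu)\ge0$ for all $\lambda\neq\mu$. For $x\in V$: (1) $x$ has a Zariski decomposition with respect to $(\mathbf{e},\boldsymbol{\phi})$ if and only if $(-\infty,x]_{\mathbf{e}}\cap\operatorname{Nef}(\boldsymbol{\phi})\neq\emptyset$; (2) a Zariski decomposition of $x$, if it exists, is unique; (3) if a Zariski decomposition $x=y+z$ exists with $z\neq0$, then (3.1) for the matrix $Q=(\phi_\lambda(e_\mu))_{\lambda,\mu\in\operatorname{Supp}(z;\mathbf{e})}$ one has $(-1)^{\#\operatorname{Supp}(z;\mathbf{e})}\det Q>0$, and if $Q$ is symmetric then $Q$ is negative definite; (3.2) $\{e_\lambda\}_{\lambda\in\operatorname{Supp}(z;\mathbf{e})}$ is linearly independent in $V/\operatorname{Num}(\boldsymbol{\phi})$.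
   Context: Write $x=\sum_\lambda x(\lambda;\mathbf{e})e_\lambda$. $x\le_{\mathbf{e}}y$ means $x(\lambda;\mathbf{e})\le y(\lambda;\mathbf{e})$ for all $\lambda$. $\operatorname{Supp}(x;\mathbf{e})=\{\lambda:x(\lambda;\mathbf{e})\neq0\}$, $(-\infty,x]_{\mathbf{e}}=\{v:v\le_{\mathbf{e}}x\}$, $\operatorname{Nef}(\boldsymbol{\phi})=\{v:\phi_\lambda(v)\ge0\ \forall\lambda\}$, $\operatorname{Num}(\boldsymbol{\phi})=\{v:\phi_\lambda(v)=0\ \forall\lambda\}$. A Zariski decomposition of $x$ with respect to $(\mathbf{e},\boldsymbol{\phi})$ is $x=y+z$ with (i) $y\in\operatorname{Nef}(\boldsymbol{\phi})$, $z\ge_{\mathbf{e}}0$; (ii) $\phi_\lambda(y)=0$ for all $\lambda\in\operatorname{Supp}(z;\mathbf{e})$; (iii) $\{w\in\sum_{\lambda\in\operatorname{Supp}(z;\mathbf{e})}\mathbb{R}_{\ge0}e_\lambda:\phi_\lambda(w)\ge0\ \forall\lambda\in\operatorname{Supp}(z;\mathbf{e})\}=\{0\}$. *)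

theory Defs
  imports "HOL-Analysis.Analysis"
begin

definition coord :: "('l \<Rightarrow> 'v::real_vector) \<Rightarrow> 'v \<Rightarrow> 'l \<Rightarrow> real" where
  "coord e x l = representation (range e) x (e l)"

definition le_e :: "('l \<Rightarrow> 'v::real_vector) \<Rightarrow> 'v \<Rightarrow> 'v \<Rightarrow> bool" where
  "le_e e x y \<longleftrightarrow> (\<forall>l. coord e x l \<le> coord e y l)"

definition Supp :: "('l \<Rightarrow> 'v::real_vector) \<Rightarrow> 'v \<Rightarrow> 'l set" where
  "Supp e x = {l. coord e x l \<noteq> 0}"

definition down_set :: "('l \<Rightarrow> 'v::real_vector) \<Rightarrow> 'v \<Rightarrow> 'v set" where
  "down_set e x = {v. le_e e v x}"

definition Nef :: "('l \<Rightarrow> 'v \<Rightarrow> real) \<Rightarrow> 'v set" where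
  "Nef phi = {v. \<forall>l. phi l v \<ge> 0}"

definition Num :: "('l \<Rightarrow> 'v \<Rightarrow> real) \<Rightarrow> 'v set" where
  "Num phi = {v. \<forall>l. phi l v = 0}"

definition pos_cone :: "('l \<Rightarrow> 'v::real_vector) \<Rightarrow> 'l set \<Rightarrow> 'v set" where
  "pos_cone e S = {(\<Sum>l\<in>S. c l *\<^sub>R e l) | c. \<forall>l\<in>S. c l \<ge> 0}"

definition zariski_decomposition ::
  "('l \<Rightarrow> 'v::real_vector) \<Rightarrow> ('l \<Rightarrow> 'v \<Rightarrow> real) \<Rightarrow> 'v \<Rightarrow> 'v \<Rightarrow> 'v \<Rightarrow> bool" where
  "zariski_decomposition e phi x y z \<longleftrightarrow>
     x = y + z \<and>
     y \<in> Nef phi \<and> le_e e 0 z \<and>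
     (\<forall>l\<in>Supp e z. phi l y = 0) \<and>
     {w \<in> pos_cone e (Supp e z). \<forall>l\<in>Supp e z. phi l w \<ge> 0} = {0}"

definition det_on :: "'l set \<Rightarrow> ('l \<Rightarrow> 'l \<Rightarrow> real) \<Rightarrow> real" where
  "det_on S Q = (\<Sum>p\<in>{p. p permutes S}. of_int (sign p) * (\<Prod>i\<in>S. Q i (p i)))"

definition symmetric_on :: "'l set \<Rightarrow> ('l \<Rightarrow> 'l \<Rightarrow> real) \<Rightarrow> bool" where
  "symmetric_on S Q \<longleftrightarrow> (\<forall>i\<in>S. \<forall>j\<in>S. Q i j = Q j i)"

definition negative_definite_on :: "'l set \<Rightarrow> ('l \<Rightarrow> 'l \<Rightarrow> real) \<Rightarrow> bool" where
  "negative_definite_on S Q \<longleftrightarrow>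
     (\<forall>v::'l \<Rightarrow> real. (\<exists>i\<in>S. v i \<noteq> 0) \<longrightarrow> (\<Sum>i\<in>S. \<Sum>j\<in>S. v i * Q i j * v j) < 0)"

definition lin_indep_mod :: "('l \<Rightarrow> 'v::real_vector) \<Rightarrow> 'l set \<Rightarrow> 'v set \<Rightarrow> bool" where
  "lin_indep_mod e S W \<longleftrightarrow>
     (\<forall>T c. finite T \<longrightarrow> T \<subseteq> S \<longrightarrow> (\<Sum>l\<in>T. c l *\<^sub>R e l) \<in> W \<longrightarrow> (\<forall>l\<in>T. c l = 0))"

end

theory Submission
  imports Defs "Jordan_Normal_Form.Determinant" "HOL-Combinatorics.Permutations"
begin

text \<open>
  The nef part of a Zariski decomposition of \<open>x\<close> is the greatest nef vector below \<open>x\<close> in the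
  coordinatewise order. Such a greatest element exists as soon as some nef vector lies below \<open>x\<close>:
  its coordinates are the suprema of the coordinates of all such vectors, and it is nef because
  \<open>\<phi>\<^sub>k\<close> is monotone in every coordinate except the \<open>k\<close>-th. Maximality forces conditions (ii) and
  (iii), and conversely (iii) forces the nef part of any decomposition to dominate every nef vector
  below \<open>x\<close>; this gives existence and uniqueness.

  Condition (iii) says that \<open>A = -Q\<close> is a Z-matrix admitting no nonzero \<open>c \<ge> 0\<close> with \<open>A c \<le> 0\<close>,
  i.e. a nonsingular M-matrix. Eliminating one index of such a matrix leaves a Schur complement of
  the same kind, and induction on the size gives \<open>det A > 0\<close>, positive definiteness in the
  symmetric case, and injectivity of \<open>A\<close>, which is (3.2).
\<close>

section \<open>Determinants and Schur complements\<close>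

lemma det_schur_complement_last:
  fixes M :: "real mat"
  assumes M: "M \<in> carrier_mat (Suc n) (Suc n)" and pivot: "M $$ (n,n) \<noteq> 0"
  shows "Determinant.det M = M $$ (n,n) *
    Determinant.det (mat n n (\<lambda>(i,j). M $$ (i,j) - M $$ (i,n) * M $$ (n,j) / M $$ (n,n)))"
proof -
  \<comment> \<open>Clear the last column by the row operations encoded in the unitriangular matrix \<open>L\<close>.\<close>
  define L :: "real mat" where "L = mat (Suc n) (Suc n)
    (\<lambda>(i,j). if i = j then 1 else if j = n then - M $$ (i,n) / M $$ (n,n) else 0)"
  have L: "L \<in> carrier_mat (Suc n) (Suc n)" unfolding L_def by simp
  have "upper_triangular L" unfolding L_def by (intro upper_triangularI) auto
  moreover have "diag_mat L = map (\<lambda>_. 1) [0..<Suc n]"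
    unfolding L_def diag_mat_def by (auto intro!: map_cong)
  ultimately have det_L: "Determinant.det L = 1"
    using det_upper_triangular[OF _ L] by (simp add: map_replicate_const)
  define N where "N = L * M"
  have N: "N \<in> carrier_mat (Suc n) (Suc n)" unfolding N_def using L M by simp
  have det_N: "Determinant.det N = Determinant.det M"
    unfolding N_def using det_mult[OF L M] det_L by simp
  have N_entry: "N $$ (i,j) = (if i = n then M $$ (n,j)
      else M $$ (i,j) - M $$ (i,n) / M $$ (n,n) * M $$ (n,j))"
    if "i < Suc n" "j < Suc n" for i j
  proof -
    have "N $$ (i,j) = (\<Sum>k\<in>{0..<Suc n}. L $$ (i,k) * M $$ (k,j))"
      unfolding N_def using that L M by (simp add: scalar_prod_def)
    also have "\<dots> = (\<Sum>k\<in>{0..<Suc n}. (if k = i then M $$ (i,j) else 0) +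
        (if k = n \<and> i \<noteq> n then - M $$ (i,n) / M $$ (n,n) * M $$ (n,j) else 0))"
      using that unfolding L_def by (intro sum.cong) auto
    finally show ?thesis using that by (simp add: sum.distrib)
  qed
  have "Determinant.det N = (\<Sum>i<Suc n. N $$ (i,n) * cofactor N i n)"
    by (rule laplace_expansion_column[OF N]) simp
  also have "\<dots> = (\<Sum>i<Suc n. if i = n then N $$ (n,n) * cofactor N n n else 0)"
    by (intro sum.cong) (auto simp: N_entry pivot)
  also have "\<dots> = N $$ (n,n) * cofactor N n n" by simp
  also have "cofactor N n n = Determinant.det (mat_delete N n n)"
    unfolding cofactor_def by simp
  also have "mat_delete N n n =
      mat n n (\<lambda>(i,j). M $$ (i,j) - M $$ (i,n) * M $$ (n,j) / M $$ (n,n))"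
    using N by (intro eq_matI) (auto simp: mat_delete_def N_entry)
  finally show ?thesis using det_N by (simp add: N_entry)
qed

lemma det_on_reindex:
  assumes T: "finite T" and f: "bij_betw f T S"
  shows "det_on S Q = det_on T (\<lambda>i j. Q (f i) (f j))"
proof -
  define g where "g = (\<lambda>\<pi> x. if x \<in> S then f (\<pi> (inv_into T f x)) else x)"
  have bij: "bij_betw g {\<pi>. \<pi> permutes T} {\<pi>. \<pi> permutes S}"
    unfolding g_def by (rule bij_betw_permutations[OF f])
  have "det_on S Q = (\<Sum>\<pi>\<in>{\<pi>. \<pi> permutes T}. of_int (sign (g \<pi>)) * (\<Prod>i\<in>S. Q i (g \<pi> i)))"
    unfolding det_on_def by (rule sum.reindex_bij_betw[OF bij, symmetric])
  also have "\<dots> = (\<Sum>\<pi>\<in>{\<pi>. \<pi> permutes T}. of_int (sign \<pi>) * (\<Prod>i\<in>T. Q (f i) (f (\<pi> i))))"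
  proof (intro sum.cong refl)
    fix \<pi> assume \<pi>: "\<pi> \<in> {\<pi>. \<pi> permutes T}"
    have inv_f: "\<And>x. x \<in> T \<Longrightarrow> inv_into T f (f x) = x"
      using f by (meson bij_betw_inv_into_left)
    interpret permutes_bij_finite \<pi> T S f "inv_into T f" "g \<pi>"
      by unfold_locales (use \<pi> f inv_f T in \<open>auto simp: g_def\<close>)
    have "(\<Prod>i\<in>S. Q i (g \<pi> i)) = (\<Prod>i\<in>T. Q (f i) (g \<pi> (f i)))"
      by (rule prod.reindex_bij_betw[OF f, symmetric])
    also have "\<dots> = (\<Prod>i\<in>T. Q (f i) (f (\<pi> i)))"
      by (intro prod.cong refl) (auto simp: g_def inv_f f_in_B)
    finally show "of_int (sign (g \<pi>)) * (\<Prod>i\<in>S. Q i (g \<pi> i)) =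
        of_int (sign \<pi>) * (\<Prod>i\<in>T. Q (f i) (f (\<pi> i)))"
      using sign_p' by simp
  qed
  also have "\<dots> = det_on T (\<lambda>i j. Q (f i) (f j))" unfolding det_on_def by simp
  finally show ?thesis .
qed

lemma det_on_eq_det_mat: "det_on {0..<n} Q = Determinant.det (mat n n (\<lambda>(i,j). Q i j))"
proof -
  have "Determinant.det (mat n n (\<lambda>(i,j). Q i j)) = (\<Sum>p\<in>{p. p permutes {0..<n}}.
      of_int (sign p) * (\<Prod>i = 0..<n. mat n n (\<lambda>(i,j). Q i j) $$ (i, p i)))"
    by (rule det_def') simp
  also have "\<dots> = det_on {0..<n} Q" unfolding det_on_def
    by (intro sum.cong refl arg_cong2[where f="(*)"] prod.cong) (auto dest: permutes_in_image)
  finally show ?thesis by simp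
qed

definition schur_complement :: "('i \<Rightarrow> 'i \<Rightarrow> real) \<Rightarrow> 'i \<Rightarrow> 'i \<Rightarrow> 'i \<Rightarrow> real" where
  "schur_complement A k = (\<lambda>i j. A i j - A i k * A k j / A k k)"

lemma det_on_schur_complement:
  assumes S: "finite S" and k: "k \<in> S" and pivot: "A k k \<noteq> 0"
  shows "det_on S A = A k k * det_on (S - {k}) (schur_complement A k)"
proof -
  define n where "n = card (S - {k})"
  obtain g where g: "bij_betw g {0..<n} (S - {k})"
    using ex_bij_betw_nat_finite[of "S - {k}"] S unfolding n_def by auto
  define f where "f = g(n := k)"
  have f_g: "\<And>i. i < n \<Longrightarrow> f i = g i" and f_n: "f n = k" unfolding f_def by simp_all
  have f: "bij_betw f {0..<Suc n} S"
  proof -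
    have "bij_betw f {0..<n} (S - {k})" using g by (rule bij_betw_cong[THEN iffD1, rotated]) (simp add: f_g)
    hence "bij_betw f ({0..<n} \<union> {n}) ((S - {k}) \<union> {f n})"
      by (intro notIn_Un_bij_betw) (auto simp: f_n)
    moreover have "{0..<n} \<union> {n} = {0..<Suc n}" and "(S - {k}) \<union> {f n} = S"
      using k by (auto simp: f_n)
    ultimately show ?thesis by simp
  qed
  define M where "M = mat (Suc n) (Suc n) (\<lambda>(i,j). A (f i) (f j))"
  have "det_on S A = Determinant.det M"
    unfolding M_def det_on_reindex[OF finite_atLeastLessThan f, of A] det_on_eq_det_mat by simp
  also have "\<dots> = M $$ (n,n) * Determinant.det
      (mat n n (\<lambda>(i,j). M $$ (i,j) - M $$ (i,n) * M $$ (n,j) / M $$ (n,n)))"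
    by (rule det_schur_complement_last) (auto simp: M_def f_n pivot)
  also have "mat n n (\<lambda>(i,j). M $$ (i,j) - M $$ (i,n) * M $$ (n,j) / M $$ (n,n)) =
      mat n n (\<lambda>(i,j). schur_complement A k (g i) (g j))"
    by (intro eq_matI) (auto simp: M_def f_n f_g schur_complement_def)
  also have "Determinant.det \<dots> = det_on (S - {k}) (schur_complement A k)"
    unfolding det_on_reindex[OF finite_atLeastLessThan g] det_on_eq_det_mat by simp
  finally show ?thesis by (simp add: M_def f_n)
qed

lemma det_on_uminus: "det_on S (\<lambda>i j. - A i j) = (-1) ^ card S * det_on S A"
proof -
  have "(\<Prod>i\<in>S. - A i (p i)) = (-1) ^ card S * (\<Prod>i\<in>S. A i (p i))" for p
  proof -
    have "(\<Prod>i\<in>S. - A i (p i)) = (\<Prod>i\<in>S. (-1) * A i (p i))" by simp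
    thus ?thesis by (simp only: prod.distrib prod_constant)
  qed
  thus ?thesis unfolding det_on_def by (simp add: sum_distrib_left algebra_simps)
qed

section \<open>Nonsingular M-matrices\<close>

text \<open>
  For a Z-matrix (nonpositive off the diagonal), the absence of a nonzero \<open>c \<ge> 0\<close> with
  \<open>A c \<le> 0\<close> is one of the standard characterisations of nonsingular M-matrices; we take it
  as the definition.
\<close>

definition nonsingular_M_matrix_on :: "'i set \<Rightarrow> ('i \<Rightarrow> 'i \<Rightarrow> real) \<Rightarrow> bool" where
  "nonsingular_M_matrix_on S A \<longleftrightarrow>
     (\<forall>i\<in>S. \<forall>j\<in>S. i \<noteq> j \<longrightarrow> A i j \<le> 0) \<and>
     (\<forall>c. (\<forall>i\<in>S. 0 \<le> c i) \<longrightarrow> (\<forall>i\<in>S. (\<Sum>j\<in>S. A i j * c j) \<le> 0) \<longrightarrow> (\<forall>i\<in>S. c i = 0))"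

lemma nonsingular_M_matrix_onD:
  assumes "nonsingular_M_matrix_on S A"
  shows nonsingular_M_matrix_on_offdiag: "\<And>i j. i \<in> S \<Longrightarrow> j \<in> S \<Longrightarrow> i \<noteq> j \<Longrightarrow> A i j \<le> 0"
    and nonsingular_M_matrix_on_nonneg_sub_zero:
      "\<And>c i. (\<And>i. i \<in> S \<Longrightarrow> 0 \<le> c i) \<Longrightarrow> (\<And>i. i \<in> S \<Longrightarrow> (\<Sum>j\<in>S. A i j * c j) \<le> 0)
        \<Longrightarrow> i \<in> S \<Longrightarrow> c i = 0"
  using assms unfolding nonsingular_M_matrix_on_def by blast+

lemma nonsingular_M_matrix_on_diag_pos:
  assumes S: "finite S" and A: "nonsingular_M_matrix_on S A" and k: "k \<in> S"
  shows "A k k > 0"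
proof (rule ccontr)
  assume "\<not> A k k > 0"
  define c where "c = (\<lambda>j. if j = k then 1 else (0::real))"
  have "(\<Sum>j\<in>S. A i j * c j) = A i k" for i
    using S k by (simp add: c_def if_distrib sum.delta cong: if_cong)
  moreover have "A i k \<le> 0" if "i \<in> S" for i
    using nonsingular_M_matrix_on_offdiag[OF A that k] \<open>\<not> A k k > 0\<close> by (cases "i = k") auto
  ultimately have "c k = 0"
    by (intro nonsingular_M_matrix_on_nonneg_sub_zero[OF A _ _ k]) (auto simp: c_def)
  thus False by (simp add: c_def)
qed

lemma nonsingular_M_matrix_on_schur_complement:
  assumes F: "finite F" "k \<notin> F" and A: "nonsingular_M_matrix_on (insert k F) A"
  shows "nonsingular_M_matrix_on F (schur_complement A k)"
  unfolding nonsingular_M_matrix_on_def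
proof (intro conjI allI impI ballI)
  have pivot: "A k k > 0" using nonsingular_M_matrix_on_diag_pos[OF _ A] F by simp
  have offdiag: "A i j \<le> 0" if "i \<in> insert k F" "j \<in> insert k F" "i \<noteq> j" for i j
    using nonsingular_M_matrix_on_offdiag[OF A that] .
  show "schur_complement A k i j \<le> 0" if "i \<in> F" "j \<in> F" "i \<noteq> j" for i j
  proof -
    have "A i j \<le> 0" "A i k \<le> 0" "A k j \<le> 0" using that F(2) by (auto intro!: offdiag)
    moreover from this have "A i k * A k j / A k k \<ge> 0" using pivot by (simp add: mult_nonpos_nonpos)
    ultimately show ?thesis by (simp add: schur_complement_def)
  qed
  \<comment> \<open>A nonnegative subsolution of the complement extends to one of \<open>A\<close> by solving row \<open>k\<close>.\<close>
  fix c' i assume c'_nonneg: "\<forall>i\<in>F. 0 \<le> c' i"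
    and c'_sub: "\<forall>i\<in>F. (\<Sum>j\<in>F. schur_complement A k i j * c' j) \<le> 0" and i: "i \<in> F"
  define b where "b = (\<Sum>j\<in>F. A k j * c' j)"
  define c where "c = c'(k := - b / A k k)"
  have "A k j * c' j \<le> 0" if "j \<in> F" for j
  proof -
    have "A k j \<le> 0" using offdiag[of k j] that F(2) by auto
    thus ?thesis using c'_nonneg that by (simp add: mult_nonpos_nonneg)
  qed
  hence "b \<le> 0" unfolding b_def by (rule sum_nonpos)
  hence "0 \<le> - b / A k k" using pivot by (simp add: divide_nonpos_pos)
  hence c_nonneg: "0 \<le> c i" if "i \<in> insert k F" for i
    using that c'_nonneg by (auto simp: c_def)
  have row: "(\<Sum>j\<in>insert k F. A i j * c j) = - A i k * b / A k k + (\<Sum>j\<in>F. A i j * c' j)" for i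
  proof -
    have "(\<Sum>j\<in>F. A i j * c j) = (\<Sum>j\<in>F. A i j * c' j)"
      using F(2) by (intro sum.cong) (auto simp: c_def)
    thus ?thesis using F by (simp add: c_def)
  qed
  have sub: "(\<Sum>j\<in>insert k F. A i j * c j) \<le> 0" if "i \<in> insert k F" for i
  proof (cases "i = k")
    case True
    thus ?thesis using pivot by (simp add: row b_def)
  next
    case False
    have "(\<Sum>j\<in>F. schur_complement A k i j * c' j) = (\<Sum>j\<in>F. A i j * c' j) - A i k / A k k * b"
      unfolding schur_complement_def b_def
      by (simp add: sum_subtractf sum_distrib_left algebra_simps)
    moreover have "(\<Sum>j\<in>F. schur_complement A k i j * c' j) \<le> 0" using c'_sub that False by simp
    moreover have "A i k / A k k * b = A i k * b / A k k" by simp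
    ultimately show ?thesis unfolding row by linarith
  qed
  have "c i = 0"
    by (rule nonsingular_M_matrix_on_nonneg_sub_zero[OF A c_nonneg sub]) (use i in auto)
  thus "c' i = 0" using i F(2) by (auto simp: c_def split: if_splits)
qed

lemma nonsingular_M_matrix_on_det_pos:
  assumes "finite S" and "nonsingular_M_matrix_on S A"
  shows "det_on S A > 0"
  using assms
proof (induction S arbitrary: A rule: finite_induct)
  case empty
  show ?case by (simp add: det_on_def)
next
  case (insert k F)
  have pivot: "A k k > 0"
    using nonsingular_M_matrix_on_diag_pos[OF _ insert.prems] insert.hyps by simp
  have "det_on F (schur_complement A k) > 0"
    using insert.IH nonsingular_M_matrix_on_schur_complement[OF insert.hyps insert.prems] .
  moreover have "insert k F - {k} = F" using insert.hyps by auto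
  ultimately show ?case
    using det_on_schur_complement[of "insert k F" k A] pivot insert.hyps by simp
qed

lemma nonsingular_M_matrix_on_quadratic_form_pos:
  assumes "finite S" and "nonsingular_M_matrix_on S A" and "\<forall>i\<in>S. \<forall>j\<in>S. A i j = A j i"
    and "\<exists>i\<in>S. v i \<noteq> 0"
  shows "(\<Sum>i\<in>S. \<Sum>j\<in>S. v i * A i j * v j) > 0"
  using assms
proof (induction S arbitrary: A v rule: finite_induct)
  case empty thus ?case by simp
next
  case (insert k F)
  have pivot: "A k k > 0"
    using nonsingular_M_matrix_on_diag_pos[OF _ insert.prems(1)] insert.hyps by simp
  have sym: "\<And>i j. i \<in> insert k F \<Longrightarrow> j \<in> insert k F \<Longrightarrow> A i j = A j i"
    using insert.prems(2) by blast
  define b where "b = (\<Sum>j\<in>F. A k j * v j)"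
  define q where "q = (\<Sum>i\<in>F. \<Sum>j\<in>F. v i * A i j * v j)"
  have col_k: "(\<Sum>i\<in>F. v i * A i k) = b" unfolding b_def
    by (intro sum.cong refl) (simp add: sym mult.commute)
  have split: "(\<Sum>i\<in>insert k F. \<Sum>j\<in>insert k F. v i * A i j * v j) =
      A k k * v k ^ 2 + 2 * v k * b + q"
  proof -
    have "(\<Sum>i\<in>insert k F. \<Sum>j\<in>insert k F. v i * A i j * v j) =
        A k k * v k ^ 2 + v k * b + v k * (\<Sum>i\<in>F. v i * A i k) + q"
      using insert.hyps unfolding b_def q_def
      by (simp add: sum.distrib sum_distrib_left sum_distrib_right power2_eq_square algebra_simps)
    thus ?thesis using col_k by simp
  qed
  \<comment> \<open>Completing the square in \<open>v k\<close> leaves the quadratic form of the Schur complement.\<close>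
  have complement: "(\<Sum>i\<in>F. \<Sum>j\<in>F. v i * schur_complement A k i j * v j) = q - b\<^sup>2 / A k k"
  proof -
    have "(\<Sum>i\<in>F. \<Sum>j\<in>F. v i * schur_complement A k i j * v j) =
        q - (\<Sum>i\<in>F. \<Sum>j\<in>F. (v i * A i k) * (A k j * v j)) / A k k"
      unfolding schur_complement_def q_def
      by (simp add: sum_subtractf sum_divide_distrib algebra_simps)
    also have "(\<Sum>i\<in>F. \<Sum>j\<in>F. (v i * A i k) * (A k j * v j)) = (\<Sum>i\<in>F. v i * A i k) * b"
      unfolding b_def by (simp add: sum_product)
    finally show ?thesis using col_k by (simp add: power2_eq_square)
  qed
  have square: "A k k * v k ^ 2 + 2 * v k * b + b\<^sup>2 / A k k = (A k k * v k + b)\<^sup>2 / A k k"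
    using pivot by (simp add: field_simps power2_eq_square)
  show ?case
  proof (cases "\<exists>i\<in>F. v i \<noteq> 0")
    case True
    have "(\<Sum>i\<in>F. \<Sum>j\<in>F. v i * schur_complement A k i j * v j) > 0"
    proof (rule insert.IH)
      show "nonsingular_M_matrix_on F (schur_complement A k)"
        using nonsingular_M_matrix_on_schur_complement[OF insert.hyps insert.prems(1)] .
      show "\<forall>i\<in>F. \<forall>j\<in>F. schur_complement A k i j = schur_complement A k j i"
        unfolding schur_complement_def by (simp add: sym mult.commute)
    qed (use True in auto)
    moreover have "(A k k * v k + b)\<^sup>2 / A k k \<ge> 0" using pivot by simp
    ultimately show ?thesis using split complement square by linarith
  next
    case False
    hence "v k \<noteq> 0" using insert.prems(3) by auto
    moreover have "b = 0" "q = 0" using False unfolding b_def q_def by auto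
    ultimately show ?thesis using split pivot by simp
  qed
qed

lemma nonsingular_M_matrix_on_kernel_trivial:
  assumes S: "finite S" and A: "nonsingular_M_matrix_on S A"
    and c: "\<And>i. i \<in> S \<Longrightarrow> (\<Sum>j\<in>S. A i j * c j) = 0" and i: "i \<in> S"
  shows "c i = 0"
proof -
  \<comment> \<open>Diagonal dominance by the solution gives \<open>A |c| \<le> 0\<close>.\<close>
  have dominance: "(\<Sum>j\<in>S. A i j * \<bar>c j\<bar>) \<le> 0" if i: "i \<in> S" for i
  proof -
    have pivot: "A i i > 0" by (rule nonsingular_M_matrix_on_diag_pos[OF S A i])
    have split: "\<And>f. (\<Sum>j\<in>S. f j) = f i + (\<Sum>j\<in>S - {i}. f j)"
      using S i by (simp add: sum.remove)
    have "A i i * c i = - (\<Sum>j\<in>S - {i}. A i j * c j)"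
      using c[OF i] split[of "\<lambda>j. A i j * c j"] by simp
    hence "\<bar>A i i * c i\<bar> = \<bar>\<Sum>j\<in>S - {i}. A i j * c j\<bar>" by simp
    hence "A i i * \<bar>c i\<bar> = \<bar>\<Sum>j\<in>S - {i}. A i j * c j\<bar>" using pivot by (simp add: abs_mult)
    also have "\<dots> \<le> (\<Sum>j\<in>S - {i}. \<bar>A i j * c j\<bar>)" by (rule sum_abs)
    also have "\<dots> = (\<Sum>j\<in>S - {i}. - (A i j * \<bar>c j\<bar>))"
      using nonsingular_M_matrix_on_offdiag[OF A] i
      by (intro sum.cong refl) (auto simp: abs_mult abs_of_nonpos)
    finally show ?thesis using split[of "\<lambda>j. A i j * \<bar>c j\<bar>"] by (simp add: sum_negf)
  qed
  have "\<bar>c i\<bar> = 0"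
    by (rule nonsingular_M_matrix_on_nonneg_sub_zero[OF A _ _ i, where c = "\<lambda>j. \<bar>c j\<bar>"])
      (use dominance in auto)
  thus ?thesis by simp
qed

section \<open>Coordinates with respect to a Hamel basis\<close>

locale hamel_basis =
  fixes e :: "'l \<Rightarrow> 'v::real_vector"
  assumes inj_basis: "inj e"
    and independent_basis: "independent (range e)"
    and span_basis: "span (range e) = UNIV"
begin

lemma coord_add: "coord e (a + b) l = coord e a l + coord e b l"
  unfolding coord_def using real_vector.representation_add[OF independent_basis, of b a] span_basis
  by simp

lemma coord_diff: "coord e (a - b) l = coord e a l - coord e b l"
  unfolding coord_def using real_vector.representation_diff[OF independent_basis, of b a] span_basis
  by simp

lemma coord_scaleR: "coord e (r *\<^sub>R a) l = r * coord e a l"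
  unfolding coord_def using real_vector.representation_scale[OF independent_basis, of a r] span_basis
  by simp

lemma coord_zero: "coord e 0 l = 0"
  unfolding coord_def by (simp add: real_vector.representation_zero)

lemma coord_basis: "coord e (e m) l = (if l = m then 1 else 0)"
  unfolding coord_def using real_vector.representation_basis[OF independent_basis, of "e m"] inj_basis
  by (auto simp: inj_eq)

lemma coord_sum: "coord e (\<Sum>i\<in>I. f i) l = (\<Sum>i\<in>I. coord e (f i) l)"
  unfolding coord_def using real_vector.representation_sum[OF independent_basis, of I f] span_basis
  by simp

lemma coord_lincomb:
  "coord e (\<Sum>m\<in>T. c m *\<^sub>R e m) l = (if finite T \<and> l \<in> T then c l else 0)"
proof -
  have "coord e (\<Sum>m\<in>T. c m *\<^sub>R e m) l = (\<Sum>m\<in>T. if l = m then c m else 0)"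
    unfolding coord_sum coord_scaleR coord_basis by (intro sum.cong) auto
  thus ?thesis by (cases "finite T") (simp_all add: sum.delta)
qed

lemma finite_Supp: "finite (Supp e x)"
proof -
  have "Supp e x = e -` {b. representation (range e) x b \<noteq> 0}"
    unfolding Supp_def coord_def by auto
  thus ?thesis using finite_vimageI[OF real_vector.finite_representation inj_basis] by simp
qed

lemma sum_coord_scaleR:
  assumes "finite T" "Supp e x \<subseteq> T"
  shows "(\<Sum>l\<in>T. coord e x l *\<^sub>R e l) = x"
proof -
  let ?r = "representation (range e) x"
  have "(\<Sum>l\<in>T. coord e x l *\<^sub>R e l) = (\<Sum>b\<in>e ` T. ?r b *\<^sub>R b)"
    unfolding coord_def
    using sum.reindex[OF inj_on_subset[OF inj_basis subset_UNIV], of "\<lambda>b. ?r b *\<^sub>R b" T]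
    by (simp add: o_def)
  also have "\<dots> = (\<Sum>b | ?r b \<noteq> 0. ?r b *\<^sub>R b)"
  proof (rule sum.mono_neutral_right)
    show "{b. ?r b \<noteq> 0} \<subseteq> e ` T"
    proof
      fix b assume b: "b \<in> {b. ?r b \<noteq> 0}"
      then obtain l where "b = e l" using real_vector.representation_ne_zero by blast
      thus "b \<in> e ` T" using b assms(2) by (auto simp: Supp_def coord_def)
    qed
  qed (use assms in auto)
  also have "\<dots> = x"
    by (rule real_vector.sum_nonzero_representation_eq[OF independent_basis]) (simp add: span_basis)
  finally show ?thesis .
qed

lemma coord_inject:
  assumes "\<And>l. coord e a l = coord e b l"
  shows "a = b"
proof -
  let ?T = "Supp e a \<union> Supp e b"
  have "a = (\<Sum>l\<in>?T. coord e a l *\<^sub>R e l)" by (rule sum_coord_scaleR[symmetric]) (auto simp: finite_Supp)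
  also have "\<dots> = (\<Sum>l\<in>?T. coord e b l *\<^sub>R e l)" using assms by simp
  also have "\<dots> = b" by (rule sum_coord_scaleR) (auto simp: finite_Supp)
  finally show ?thesis .
qed

lemma le_e_antisym: "le_e e a b \<Longrightarrow> le_e e b a \<Longrightarrow> a = b"
  unfolding le_e_def by (intro coord_inject order_antisym) auto

lemma le_e_zero_iff: "le_e e 0 z \<longleftrightarrow> (\<forall>l. 0 \<le> coord e z l)"
  by (simp add: le_e_def coord_zero)

lemma ex_coord_eq:
  assumes "finite {l. f l \<noteq> 0}"
  shows "\<exists>u. \<forall>l. coord e u l = f l"
  using assms by (intro exI[of _ "\<Sum>l | f l \<noteq> 0. f l *\<^sub>R e l"]) (auto simp: coord_lincomb)

end

section \<open>Zariski decompositions\<close>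

lemma neg_mult_abs_le: "0 \<le> c \<Longrightarrow> - (c * \<bar>a\<bar>) \<le> c * (a::real)"
  by (metis abs_ge_minus_self minus_le_iff mult_left_mono mult_minus_right)

lemma ex_pos_scale_le:
  fixes f g :: "'a \<Rightarrow> real"
  assumes "finite S" and f: "\<And>l. l \<in> S \<Longrightarrow> 0 < f l"
  shows "\<exists>\<epsilon>>0. \<forall>l\<in>S. \<epsilon> * g l \<le> f l"
proof -
  define \<epsilon> where "\<epsilon> = Min (insert 1 ((\<lambda>l. f l / (\<bar>g l\<bar> + 1)) ` S))"
  have "\<epsilon> > 0" unfolding \<epsilon>_def using assms by (auto intro!: divide_pos_pos)
  moreover have "\<epsilon> * g l \<le> f l" if "l \<in> S" for l
  proof -
    have "\<epsilon> \<le> f l / (\<bar>g l\<bar> + 1)" unfolding \<epsilon>_def using assms(1) that by simp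
    hence "\<epsilon> * (\<bar>g l\<bar> + 1) \<le> f l" by (simp add: pos_le_divide_eq add_nonneg_pos)
    moreover have "\<epsilon> * g l \<le> \<epsilon> * (\<bar>g l\<bar> + 1)" using \<open>\<epsilon> > 0\<close> by (intro mult_left_mono) auto
    ultimately show ?thesis by linarith
  qed
  ultimately show ?thesis by blast
qed

locale zariski_setting = hamel_basis e for e :: "'l \<Rightarrow> 'v::real_vector" +
  fixes phi :: "'l \<Rightarrow> 'v \<Rightarrow> real"
  assumes linear_phi: "\<And>l. linear (phi l)"
    and phi_offdiag: "\<And>l m. l \<noteq> m \<Longrightarrow> phi l (e m) \<ge> 0"
begin

lemma phi_add: "phi k (a + b) = phi k a + phi k b"
  using linear_phi by (simp add: linear_add)

lemma phi_diff: "phi k (a - b) = phi k a - phi k b"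
  using linear_phi by (simp add: linear_diff)

lemma phi_scaleR: "phi k (r *\<^sub>R a) = r * phi k a"
  using linear_phi by (simp add: linear_scale)

lemma phi_lincomb: "phi k (\<Sum>j\<in>T. c j *\<^sub>R e j) = (\<Sum>j\<in>T. c j * phi k (e j))"
  using linear_phi by (simp add: linear_sum linear_scale)

lemma Nef_segment:
  assumes "y \<in> Nef phi" "y + \<epsilon> *\<^sub>R w \<in> Nef phi" "0 \<le> \<delta>" "\<delta> \<le> \<epsilon>"
  shows "y + \<delta> *\<^sub>R w \<in> Nef phi"
proof -
  have "0 \<le> phi l y + \<delta> * phi l w" for l
  proof (cases "0 \<le> phi l w")
    case False
    hence "\<epsilon> * phi l w \<le> \<delta> * phi l w" using assms(4) by (simp add: mult_right_mono_neg)
    moreover have "0 \<le> phi l (y + \<epsilon> *\<^sub>R w)" using assms(2) by (simp add: Nef_def)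
    ultimately show ?thesis by (simp add: phi_add phi_scaleR)
  qed (use assms(1,3) in \<open>simp add: Nef_def\<close>)
  thus ?thesis by (simp add: Nef_def phi_add phi_scaleR)
qed

lemma phi_ge_diag_term:
  assumes "le_e e 0 r"
  shows "coord e r k * phi k (e k) \<le> phi k r"
proof -
  have nonneg: "0 \<le> coord e r m" for m using assms by (simp add: le_e_zero_iff)
  have "phi k r = (\<Sum>m\<in>insert k (Supp e r). coord e r m * phi k (e m))"
    by (subst (1) sum_coord_scaleR[of "insert k (Supp e r)" r, symmetric])
      (auto simp: finite_Supp phi_lincomb)
  also have "\<dots> = coord e r k * phi k (e k) + (\<Sum>m\<in>Supp e r - {k}. coord e r m * phi k (e m))"
    by (simp add: finite_Supp sum.insert_remove)
  finally have "phi k r = coord e r k * phi k (e k) + (\<Sum>m\<in>Supp e r - {k}. coord e r m * phi k (e m))" .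
  moreover have "(\<Sum>m\<in>Supp e r - {k}. coord e r m * phi k (e m)) \<ge> 0"
    using nonneg phi_offdiag by (intro sum_nonneg) auto
  ultimately show ?thesis by simp
qed

lemma phi_nonneg_if_coord_zero: "le_e e 0 r \<Longrightarrow> coord e r k = 0 \<Longrightarrow> 0 \<le> phi k r"
  using phi_ge_diag_term[of r k] by simp

definition greatest_nef_below :: "'v \<Rightarrow> 'v \<Rightarrow> bool" where
  "greatest_nef_below x y \<longleftrightarrow>
     y \<in> down_set e x \<inter> Nef phi \<and> (\<forall>w\<in>down_set e x \<inter> Nef phi. le_e e w y)"

lemma greatest_nef_below_unique: "greatest_nef_below x y \<Longrightarrow> greatest_nef_below x y' \<Longrightarrow> y = y'"
  unfolding greatest_nef_below_def by (blast intro: le_e_antisym)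

lemma zariski_nef_part_greatest:
  assumes ZD: "zariski_decomposition e phi x y z"
  shows "greatest_nef_below x y"
  unfolding greatest_nef_below_def
proof (intro conjI ballI)
  show "y \<in> down_set e x \<inter> Nef phi"
    using ZD unfolding zariski_decomposition_def down_set_def le_e_def by (auto simp: coord_add coord_zero)
  fix w assume w: "w \<in> down_set e x \<inter> Nef phi"
  define S where "S = Supp e z"
  define d where "d = w - y"
  have z: "x = y + z" "\<forall>k\<in>S. phi k y = 0" "{u \<in> pos_cone e S. \<forall>l\<in>S. phi l u \<ge> 0} = {0}"
    using ZD unfolding zariski_decomposition_def S_def by auto
  have "coord e w l \<le> coord e y l + coord e z l" for l
    using w z(1) by (simp add: down_set_def le_e_def coord_add)
  hence d_le: "coord e d l \<le> coord e z l" for l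
    unfolding d_def coord_diff by (smt (verit))
  have d_off: "coord e d l \<le> 0" if "l \<notin> S" for l
    using d_le[of l] that by (simp add: S_def Supp_def)
  \<comment> \<open>The positive part \<open>u\<close> of \<open>w - y\<close> lies in the cone over \<open>S\<close> and is tested nonnegatively.\<close>
  define u where "u = (\<Sum>l\<in>S. max 0 (coord e d l) *\<^sub>R e l)"
  have fin: "finite S" unfolding S_def by (rule finite_Supp)
  have coord_u: "coord e u l = max 0 (coord e d l)" for l
    using fin d_off[of l] by (auto simp: u_def coord_lincomb)
  have u_nonneg: "le_e e 0 u" by (simp add: le_e_zero_iff coord_u)
  have "phi k u \<ge> 0" if k: "k \<in> S" for k
  proof (cases "coord e d k \<le> 0")
    case True
    thus ?thesis using phi_nonneg_if_coord_zero[OF u_nonneg] by (simp add: coord_u)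
  next
    case False
    have "0 \<le> phi k (u - d)"
      using False by (intro phi_nonneg_if_coord_zero) (auto simp: le_e_zero_iff coord_diff coord_u)
    moreover have "0 \<le> phi k w" using w by (simp add: Nef_def)
    ultimately show ?thesis using z(2) k by (simp add: phi_diff d_def)
  qed
  moreover have "u \<in> pos_cone e S" unfolding pos_cone_def u_def by auto
  ultimately have "u = 0" using z(3) by blast
  hence "coord e d l \<le> 0" for l using coord_u[of l] by (simp add: coord_zero)
  thus "le_e e w y" by (simp add: le_e_def d_def coord_diff)
qed

lemma zariski_decomposition_unique:
  assumes "zariski_decomposition e phi x y z" and "zariski_decomposition e phi x y' z'"
  shows "y = y' \<and> z = z'"
proof -
  have "y = y'" using assms by (meson greatest_nef_below_unique zariski_nef_part_greatest)
  moreover have "z = x - y" "z' = x - y'"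
    using assms unfolding zariski_decomposition_def by (auto simp: algebra_simps)
  ultimately show ?thesis by simp
qed

lemma Nef_if_approximable_below:
  assumes "\<And>k \<epsilon>. \<epsilon> > 0 \<Longrightarrow> \<exists>w\<in>Nef phi. le_e e w y \<and> coord e y k - coord e w k < \<epsilon>"
  shows "y \<in> Nef phi"
proof -
  have "0 \<le> phi k y + \<epsilon>" if "\<epsilon> > 0" for k \<epsilon>
  proof -
    define p where "p = \<bar>phi k (e k)\<bar>"
    obtain w where w: "w \<in> Nef phi" "le_e e w y" and close: "coord e y k - coord e w k < \<epsilon> / (p + 1)"
      using assms[of "\<epsilon> / (p + 1)"] \<open>\<epsilon> > 0\<close> by (auto simp: p_def)
    have r: "le_e e 0 (y - w)" using w(2) by (simp add: le_e_def coord_diff coord_zero)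
    have "- (\<epsilon> / (p + 1) * p) \<le> - (coord e (y - w) k * p)"
      using close r by (intro le_imp_neg_le mult_right_mono) (auto simp: p_def coord_diff le_e_zero_iff)
    also have "\<dots> \<le> coord e (y - w) k * phi k (e k)"
      using r by (simp add: p_def le_e_zero_iff neg_mult_abs_le)
    also have "\<dots> \<le> phi k (y - w)" by (rule phi_ge_diag_term[OF r])
    finally have "- (\<epsilon> / (p + 1) * p) \<le> phi k y - phi k w" by (simp add: phi_diff)
    moreover have "0 \<le> phi k w" using w(1) by (simp add: Nef_def)
    moreover have "\<epsilon> / (p + 1) * p \<le> \<epsilon>"
      using \<open>\<epsilon> > 0\<close> by (simp add: p_def field_simps)
    ultimately show ?thesis by linarith
  qed
  thus ?thesis unfolding Nef_def by (auto intro: field_le_epsilon[where x = 0, simplified])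
qed

lemma ex_greatest_nef_below:
  assumes v: "v \<in> down_set e x \<inter> Nef phi"
  shows "\<exists>y. greatest_nef_below x y"
proof -
  define D where "D = down_set e x \<inter> Nef phi"
  define t where "t l = Sup ((\<lambda>w. coord e w l) ` D)" for l
  have bdd: "bdd_above ((\<lambda>w. coord e w l) ` D)" for l
    by (rule bdd_aboveI[of _ "coord e x l"]) (auto simp: D_def down_set_def le_e_def)
  have t_ge: "coord e w l \<le> t l" if "w \<in> D" for w l
    unfolding t_def using that by (intro cSup_upper bdd) auto
  have t_le: "t l \<le> coord e x l" for l
    unfolding t_def using v by (intro cSup_least) (auto simp: D_def down_set_def le_e_def)
  have "{l. t l \<noteq> 0} \<subseteq> Supp e v \<union> Supp e x"
  proof
    fix l assume "l \<in> {l. t l \<noteq> 0}"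
    moreover have "coord e v l \<le> t l" "t l \<le> coord e x l" using t_ge[of v] t_le v by (simp_all add: D_def)
    ultimately show "l \<in> Supp e v \<union> Supp e x" by (auto simp: Supp_def)
  qed
  then obtain y where y: "\<And>l. coord e y l = t l"
    using ex_coord_eq[of t] finite_Supp by (meson finite_UnI finite_subset)
  have "y \<in> Nef phi"
  proof (rule Nef_if_approximable_below)
    fix k and \<epsilon> :: real assume "\<epsilon> > 0"
    then obtain w where w: "w \<in> D" "t k - \<epsilon> < coord e w k"
      using less_cSupE[of "t k - \<epsilon>" "(\<lambda>w. coord e w k) ` D"] v unfolding t_def D_def by auto
    have "le_e e w y" using t_ge[OF w(1)] by (simp add: le_e_def y)
    thus "\<exists>w\<in>Nef phi. le_e e w y \<and> coord e y k - coord e w k < \<epsilon>"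
      using w by (auto simp: D_def y)
  qed
  moreover have "y \<in> down_set e x" using t_le by (simp add: down_set_def le_e_def y)
  moreover have "le_e e w y" if "w \<in> D" for w using t_ge[OF that] by (simp add: le_e_def y)
  ultimately show ?thesis unfolding greatest_nef_below_def D_def by blast
qed

lemma greatest_nef_below_no_increment:
  assumes "greatest_nef_below x y"
    and w: "le_e e 0 w" "Supp e w \<subseteq> Supp e (x - y)"
    and \<epsilon>: "\<epsilon> > 0" "y + \<epsilon> *\<^sub>R w \<in> Nef phi"
  shows "w = 0"
proof -
  have y: "y \<in> down_set e x \<inter> Nef phi" "\<forall>w\<in>down_set e x \<inter> Nef phi. le_e e w y"
    using assms(1) unfolding greatest_nef_below_def by blast+
  have z_pos: "0 < coord e (x - y) l" if "l \<in> Supp e (x - y)" for l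
    using y(1) that by (auto simp: Supp_def down_set_def le_e_def coord_diff less_le)
  obtain \<epsilon>' where \<epsilon>': "\<epsilon>' > 0" "\<forall>l\<in>Supp e (x - y). \<epsilon>' * coord e w l \<le> coord e (x - y) l"
    using ex_pos_scale_le[where S = "Supp e (x - y)" and f = "coord e (x - y)" and g = "coord e w"]
      finite_Supp z_pos by blast
  define \<delta> where "\<delta> = min \<epsilon> \<epsilon>'"
  have \<delta>: "0 < \<delta>" "\<delta> \<le> \<epsilon>" "\<delta> \<le> \<epsilon>'" using \<epsilon> \<epsilon>' by (auto simp: \<delta>_def)
  have w_nonneg: "0 \<le> coord e w l" for l using w(1) by (simp add: le_e_zero_iff)
  have "y + \<delta> *\<^sub>R w \<in> Nef phi"
    using Nef_segment[OF _ \<epsilon>(2)] y(1) \<delta> by simp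
  moreover have "coord e (y + \<delta> *\<^sub>R w) l \<le> coord e x l" for l
  proof (cases "l \<in> Supp e (x - y)")
    case True
    have "\<delta> * coord e w l \<le> \<epsilon>' * coord e w l" using \<delta>(3) w_nonneg by (rule mult_right_mono)
    moreover have "\<epsilon>' * coord e w l \<le> coord e (x - y) l" using \<epsilon>'(2) True by blast
    ultimately show ?thesis unfolding coord_add coord_scaleR coord_diff by linarith
  next
    case False
    hence "coord e w l = 0" using w(2) by (auto simp: Supp_def)
    thus ?thesis using y(1) by (simp add: coord_add coord_scaleR down_set_def le_e_def)
  qed
  ultimately have "le_e e (y + \<delta> *\<^sub>R w) y" using y(2) by (simp add: down_set_def le_e_def)
  hence "coord e w l \<le> 0" for l using \<delta>(1) by (simp add: le_e_def coord_add coord_scaleR mult_le_0_iff)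
  thus ?thesis using w_nonneg by (intro coord_inject) (simp add: coord_zero order_antisym)
qed

lemma greatest_nef_below_phi_eq_0:
  assumes y: "greatest_nef_below x y" and k: "k \<in> Supp e (x - y)"
  shows "phi k y = 0"
proof (rule ccontr)
  have y_nef: "0 \<le> phi m y" for m using y by (simp add: greatest_nef_below_def Nef_def)
  assume "phi k y \<noteq> 0"
  hence pos: "0 < phi k y" using y_nef[of k] by simp
  define p where "p = \<bar>phi k (e k)\<bar>"
  define \<epsilon> where "\<epsilon> = phi k y / (p + 1)"
  have \<epsilon>: "\<epsilon> > 0" using pos by (simp add: \<epsilon>_def p_def add_nonneg_pos)
  have "0 \<le> phi m (y + \<epsilon> *\<^sub>R e k)" for m
  proof (cases "m = k")
    case True
    have "\<epsilon> * p \<le> phi k y" using pos by (simp add: \<epsilon>_def p_def field_simps)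
    moreover have "- (\<epsilon> * p) \<le> \<epsilon> * phi k (e k)" using \<epsilon> by (simp add: p_def neg_mult_abs_le)
    ultimately show ?thesis using True by (simp add: phi_add phi_scaleR)
  qed (use y_nef phi_offdiag \<epsilon> in \<open>simp add: phi_add phi_scaleR\<close>)
  hence "e k = 0"
    using k \<epsilon> by (intro greatest_nef_below_no_increment[OF y, where \<epsilon> = \<epsilon>])
      (auto simp: Nef_def le_e_zero_iff coord_basis Supp_def)
  thus False using coord_basis[of k k] by (simp add: coord_zero)
qed

lemma greatest_nef_below_cone_trivial:
  assumes y: "greatest_nef_below x y"
  shows "{w \<in> pos_cone e (Supp e (x - y)). \<forall>l\<in>Supp e (x - y). phi l w \<ge> 0} = {0}"
    (is "{w \<in> pos_cone e ?S. _} = _")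
proof (intro equalityI subsetI)
  fix w assume w: "w \<in> {w \<in> pos_cone e ?S. \<forall>l\<in>?S. phi l w \<ge> 0}"
  then obtain c where wc: "w = (\<Sum>l\<in>?S. c l *\<^sub>R e l)" and c: "\<forall>l\<in>?S. c l \<ge> 0"
    by (auto simp: pos_cone_def)
  have coord_w: "coord e w l = (if l \<in> ?S then c l else 0)" for l
    using finite_Supp by (simp add: wc coord_lincomb)
  have w_nonneg: "le_e e 0 w" using c by (simp add: le_e_zero_iff coord_w)
  \<comment> \<open>Outside \<open>S\<close> the test \<open>\<phi>\<^sub>m w \<ge> 0\<close> comes for free, so \<open>y + w\<close> is nef.\<close>
  have "0 \<le> phi m w" for m
    using w phi_nonneg_if_coord_zero[OF w_nonneg, of m] by (cases "m \<in> ?S") (auto simp: coord_w)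
  hence "y + 1 *\<^sub>R w \<in> Nef phi"
    using y by (simp add: greatest_nef_below_def Nef_def phi_add)
  hence "w = 0"
    using w_nonneg by (intro greatest_nef_below_no_increment[OF y, where \<epsilon> = 1])
      (auto simp: Supp_def coord_w)
  thus "w \<in> {0}" by simp
next
  fix w :: 'v assume "w \<in> {0}"
  moreover have "(0::'v) \<in> pos_cone e ?S"
    unfolding pos_cone_def by (intro CollectI exI[of _ "\<lambda>_. 0"]) simp
  ultimately show "w \<in> {w \<in> pos_cone e ?S. \<forall>l\<in>?S. phi l w \<ge> 0}"
    using phi_scaleR[of _ 0 0] by simp
qed

lemma greatest_nef_below_zariski:
  assumes "greatest_nef_below x y"
  shows "zariski_decomposition e phi x y (x - y)"
  using assms greatest_nef_below_phi_eq_0[OF assms] greatest_nef_below_cone_trivial[OF assms]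
  unfolding zariski_decomposition_def greatest_nef_below_def
  by (auto simp: down_set_def le_e_def coord_diff coord_zero)

lemma zariski_decomposition_exists_iff:
  "(\<exists>y z. zariski_decomposition e phi x y z) \<longleftrightarrow> down_set e x \<inter> Nef phi \<noteq> {}"
proof
  assume "\<exists>y z. zariski_decomposition e phi x y z"
  thus "down_set e x \<inter> Nef phi \<noteq> {}"
    using zariski_nef_part_greatest unfolding greatest_nef_below_def by blast
next
  assume "down_set e x \<inter> Nef phi \<noteq> {}"
  thus "\<exists>y z. zariski_decomposition e phi x y z"
    using ex_greatest_nef_below greatest_nef_below_zariski by blast
qed

lemma zariski_negative_part_M_matrix:
  assumes "zariski_decomposition e phi x y z"
  shows "nonsingular_M_matrix_on (Supp e z) (\<lambda>l m. - phi l (e m))"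
  unfolding nonsingular_M_matrix_on_def
proof (intro conjI allI impI ballI)
  show "- phi l (e m) \<le> 0" if "l \<noteq> m" for l m using phi_offdiag[OF that] by simp
  fix c i assume c: "\<forall>i\<in>Supp e z. 0 \<le> c i"
    and sub: "\<forall>i\<in>Supp e z. (\<Sum>j\<in>Supp e z. - phi i (e j) * c j) \<le> 0" and i: "i \<in> Supp e z"
  define w where "w = (\<Sum>j\<in>Supp e z. c j *\<^sub>R e j)"
  have "w \<in> pos_cone e (Supp e z)" unfolding pos_cone_def w_def using c by blast
  moreover have "\<forall>l\<in>Supp e z. phi l w \<ge> 0"
  proof
    fix l assume "l \<in> Supp e z"
    moreover have "phi l w = - (\<Sum>j\<in>Supp e z. - phi l (e j) * c j)"
      by (simp add: w_def phi_lincomb sum_negf mult.commute)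
    ultimately show "phi l w \<ge> 0" using sub by simp
  qed
  ultimately have "w = 0" using assms unfolding zariski_decomposition_def by blast
  thus "c i = 0" using i coord_lincomb[of c "Supp e z" i] finite_Supp by (simp add: w_def coord_zero)
qed

lemma zariski_det_sign:
  assumes "zariski_decomposition e phi x y z"
  shows "(-1) ^ card (Supp e z) * det_on (Supp e z) (\<lambda>l m. phi l (e m)) > 0"
proof -
  have "0 < det_on (Supp e z) (\<lambda>l m. - phi l (e m))"
    by (rule nonsingular_M_matrix_on_det_pos[OF finite_Supp zariski_negative_part_M_matrix[OF assms]])
  thus ?thesis by (simp only: det_on_uminus)
qed

lemma zariski_negative_definite:
  assumes "zariski_decomposition e phi x y z"
    and "symmetric_on (Supp e z) (\<lambda>l m. phi l (e m))"
  shows "negative_definite_on (Supp e z) (\<lambda>l m. phi l (e m))"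
  unfolding negative_definite_on_def
proof (intro allI impI)
  fix v :: "'l \<Rightarrow> real" assume "\<exists>i\<in>Supp e z. v i \<noteq> 0"
  hence "(\<Sum>i\<in>Supp e z. \<Sum>j\<in>Supp e z. v i * - phi i (e j) * v j) > 0"
    using assms(2) unfolding symmetric_on_def
    by (intro nonsingular_M_matrix_on_quadratic_form_pos[OF finite_Supp
          zariski_negative_part_M_matrix[OF assms(1)]]) auto
  thus "(\<Sum>i\<in>Supp e z. \<Sum>j\<in>Supp e z. v i * phi i (e j) * v j) < 0" by (simp add: sum_negf)
qed

lemma zariski_lin_indep_mod_Num:
  assumes "zariski_decomposition e phi x y z"
  shows "lin_indep_mod e (Supp e z) (Num phi)"
  unfolding lin_indep_mod_def
proof (intro allI impI ballI)
  fix T c l assume T: "finite T" "T \<subseteq> Supp e z" and num: "(\<Sum>l\<in>T. c l *\<^sub>R e l) \<in> Num phi"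
    and l: "l \<in> T"
  define c' where "c' = (\<lambda>l. if l \<in> T then c l else 0)"
  have "(\<Sum>j\<in>Supp e z. - phi i (e j) * c' j) = - phi i (\<Sum>l\<in>T. c l *\<^sub>R e l)" for i
  proof -
    have "(\<Sum>j\<in>Supp e z. - phi i (e j) * c' j) = (\<Sum>j\<in>T. - phi i (e j) * c j)"
      using T finite_Supp[of z] unfolding c'_def by (intro sum.mono_neutral_cong_right) auto
    thus ?thesis by (simp add: phi_lincomb sum_negf mult.commute)
  qed
  hence kernel: "(\<Sum>j\<in>Supp e z. - phi i (e j) * c' j) = 0" for i
    using num by (simp add: Num_def)
  have "c' l = 0"
    by (rule nonsingular_M_matrix_on_kernel_trivial[OF finite_Supp
          zariski_negative_part_M_matrix[OF assms] kernel]) (use l T(2) in auto)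
  thus "c l = 0" using l by (simp add: c'_def)
qed

end

theorem proposition1p1p1:
  fixes e :: "'l \<Rightarrow> 'v::real_vector"
    and phi :: "'l \<Rightarrow> 'v \<Rightarrow> real"
    and x :: 'v
  assumes basis_inj: "inj e"
    and basis_indep: "independent (range e)"
    and basis_span: "span (range e) = UNIV"
    and phi_linear: "\<And>l. linear (phi l)"
    and phi_offdiag: "\<And>l m. l \<noteq> m \<Longrightarrow> phi l (e m) \<ge> 0"
  shows
    "((\<exists>y z. zariski_decomposition e phi x y z) \<longleftrightarrow> down_set e x \<inter> Nef phi \<noteq> {})
     \<and> (\<forall>y z y' z'. zariski_decomposition e phi x y z \<longrightarrow> zariski_decomposition e phi x y' z'
          \<longrightarrow> y = y' \<and> z = z')
     \<and> (\<forall>y z. zariski_decomposition e phi x y z \<longrightarrow> z \<noteq> 0 \<longrightarrow>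
          (let S = Supp e z; Q = (\<lambda>l m. phi l (e m)) in
            ((-1) ^ card S * det_on S Q > 0
             \<and> (symmetric_on S Q \<longrightarrow> negative_definite_on S Q))
            \<and> lin_indep_mod e S (Num phi)))"
proof -
  interpret zariski_setting e phi
    using assms by (simp add: zariski_setting_def hamel_basis_def zariski_setting_axioms_def)
  show ?thesis
    unfolding Let_def
    using zariski_decomposition_exists_iff zariski_decomposition_unique zariski_det_sign
      zariski_negative_definite zariski_lin_indep_mod_Num
    by blast
qed

end
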